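(* Let $X$ be a feasible solution of the General-Cost Convex Program and let $\alpha_i$ be the first arrival times produced by Continuous-Time Poisson Rounding from $X$. For any $\tau\ge 0$, $$\mathbf{E}\Big[\sum_{i:\,\alpha_i<\tau}c_i\Big]\le\tau.$$
   Context: Boxes $[n]$ with costs $c_i>0$. Write $x_+=\max\{x,0\}$. A feasible solution of the General-Cost Convex Program is a family of non-decreasing functions $X_i:[0,\infty)\to[0,1]$, $i\in[n]$, with $\sum_{i\in[n]}\big(X_i(t)-X_i((t-c_i)_+)\big)\le 1$ for all $t\ge 0$. Continuous-Time Poisson Rounding: let $\bar x_i(t)=\frac1t\int_0^t\big(X_i(t')-X_i((t'-c_i)_+)\big)\,dt'$. Independently for each box $i$, arrivals of box $i$ form a non-homogeneous Poisson process in time $\tau\ge 0$ with rate $\frac1{c_i}\bar x_i(\tau/2)$; $\alpha_i$ is the first arrival time of box $i$ ($\infty$ if none). *)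

theory Defs
  imports "HOL-Probability.Probability"
begin

text \<open>Boxes are indexed by {..<n} (the paper's [n]); costs c i > 0.\<close>

definition pos_part :: "real \<Rightarrow> real" where
  "pos_part x = max x 0"

definition gccp_feasible :: "nat \<Rightarrow> (nat \<Rightarrow> real) \<Rightarrow> (nat \<Rightarrow> real \<Rightarrow> real) \<Rightarrow> bool" where
  "gccp_feasible n c X \<longleftrightarrow>
     (\<forall>i<n. mono_on {0..} (X i) \<and> (\<forall>t\<ge>0. 0 \<le> X i t \<and> X i t \<le> 1)) \<and>
     (\<forall>t\<ge>0. (\<Sum>i<n. X i t - X i (pos_part (t - c i))) \<le> 1)"

definition xbar :: "(nat \<Rightarrow> real) \<Rightarrow> (nat \<Rightarrow> real \<Rightarrow> real) \<Rightarrow> nat \<Rightarrow> real \<Rightarrow> real" where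
  "xbar c X i t = (1 / t) * integral {0..t} (\<lambda>t'. X i t' - X i (pos_part (t' - c i)))"

definition cum_rate :: "(nat \<Rightarrow> real) \<Rightarrow> (nat \<Rightarrow> real \<Rightarrow> real) \<Rightarrow> nat \<Rightarrow> real \<Rightarrow> real" where
  "cum_rate c X i \<tau> = integral {0..\<tau>} (\<lambda>s. (1 / c i) * xbar c X i (s / 2))"

text \<open>alpha i (values in ereal, \<infinity> = no arrival) are independent random variables, each
  distributed as the first arrival time of a non-homogeneous Poisson process with the
  above rate: P(alpha_i > t) = exp(- cum_rate i t) for all t \<ge> 0.\<close>
definition poisson_rounding ::
  "'w measure \<Rightarrow> nat \<Rightarrow> (nat \<Rightarrow> real) \<Rightarrow> (nat \<Rightarrow> real \<Rightarrow> real) \<Rightarrow> (nat \<Rightarrow> 'w \<Rightarrow> ereal) \<Rightarrow> bool" where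
  "poisson_rounding M n c X \<alpha> \<longleftrightarrow>
     prob_space M \<and>
     prob_space.indep_vars M (\<lambda>_. borel) \<alpha> {..<n} \<and>
     (\<forall>i<n. \<forall>\<omega>\<in>space M. 0 \<le> \<alpha> i \<omega>) \<and>
     (\<forall>i<n. \<forall>t\<ge>0. measure M {\<omega>\<in>space M. ereal t < \<alpha> i \<omega>} = exp (- cum_rate c X i t))"

end

theory Submission
  imports Defs
begin

text \<open>
  By linearity of expectation the expectation is
  \<open>\<Sum>i. c i * P(\<alpha> i < \<tau>)\<close>. Since \<open>P(\<alpha> i < \<tau>) \<le> 1 - exp (- \<Lambda>\<^sub>i(\<tau>)) \<le> \<Lambda>\<^sub>i(\<tau>)\<close> for the
  cumulative intensity \<open>\<Lambda>\<^sub>i\<close>, and \<open>c i * \<Lambda>\<^sub>i(\<tau>) = \<integral>\<^sub>0\<^sup>\<tau> xbar i (s/2) ds\<close>, it suffices that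
  \<open>\<Sum>i. xbar i t \<le> 1\<close> for all \<open>t \<ge> 0\<close>. This holds because \<open>xbar i t\<close> is the time average over
  \<open>[0,t]\<close> of \<open>X i t' - X i ((t' - c i)\<^sub>+)\<close>, whose sum over \<open>i\<close> is at most 1 by feasibility.
\<close>

lemma integral_nonneg_unconditional:
  fixes f :: "'a::euclidean_space \<Rightarrow> real"
  assumes "\<And>x. x \<in> S \<Longrightarrow> 0 \<le> f x"
  shows "0 \<le> integral S f"
proof (cases "f integrable_on S")
  case True
  then show ?thesis using assms by (rule integral_nonneg)
qed (simp add: not_integrable_integral)

text \<open>The \<open>f i\<close> need not be integrable: a non-integrable one has integral 0.\<close>

lemma sum_integral_le_integral:
  fixes f :: "'i \<Rightarrow> 'a::euclidean_space \<Rightarrow> real"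
  assumes fin: "finite I" and nonneg: "\<And>i x. i \<in> I \<Longrightarrow> x \<in> S \<Longrightarrow> 0 \<le> f i x"
    and le: "\<And>x. x \<in> S \<Longrightarrow> (\<Sum>i\<in>I. f i x) \<le> g x" and g: "g integrable_on S"
  shows "(\<Sum>i\<in>I. integral S (f i)) \<le> integral S g"
proof -
  define J where "J = {i\<in>I. f i integrable_on S}"
  have JI: "J \<subseteq> I" and fin_J: "finite J" using fin by (auto simp: J_def)
  have "(\<Sum>i\<in>I. integral S (f i)) = (\<Sum>i\<in>J. integral S (f i))"
    by (rule sum.mono_neutral_right[OF fin JI]) (auto simp: J_def not_integrable_integral)
  also have "\<dots> = integral S (\<lambda>x. \<Sum>i\<in>J. f i x)"
    by (rule integral_sum[symmetric]) (use fin_J in \<open>auto simp: J_def\<close>)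
  also have "\<dots> \<le> integral S g"
  proof (rule integral_le)
    show "(\<lambda>x. \<Sum>i\<in>J. f i x) integrable_on S"
      by (rule integrable_sum) (use fin_J in \<open>auto simp: J_def\<close>)
    fix x assume x: "x \<in> S"
    have "(\<Sum>i\<in>J. f i x) \<le> (\<Sum>i\<in>I. f i x)"
      by (rule sum_mono2[OF fin JI]) (use nonneg x in auto)
    also have "\<dots> \<le> g x" using le x .
    finally show "(\<Sum>i\<in>J. f i x) \<le> g x" .
  qed (fact g)
  finally show ?thesis .
qed

lemma (in prob_space) expectation_sum_over_occurring_events:
  fixes c :: "'i \<Rightarrow> real"
  assumes "finite I" and "\<And>i. i \<in> I \<Longrightarrow> A i \<in> events"
  shows "expectation (\<lambda>\<omega>. \<Sum>i\<in>{i\<in>I. \<omega> \<in> A i}. c i) = (\<Sum>i\<in>I. c i * prob (A i))"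
proof -
  have "expectation (\<lambda>\<omega>. \<Sum>i\<in>{i\<in>I. \<omega> \<in> A i}. c i)
      = expectation (\<lambda>\<omega>. \<Sum>i\<in>I. c i * indicator (A i) \<omega>)"
    using \<open>finite I\<close> by (intro Bochner_Integration.integral_cong refl)
      (simp add: sum.If_cases indicator_def Int_def)
  also have "\<dots> = (\<Sum>i\<in>I. c i * prob (A i))"
    using assms by (subst Bochner_Integration.integral_sum)
      (auto intro!: integrable_mult_right integrable_real_indicator simp: emeasure_eq_measure)
  finally show ?thesis .
qed

lemma (in prob_space) prob_less_le_of_survival:
  fixes Y :: "'a \<Rightarrow> 'b::{linorder_topology, second_countable_topology}"
  assumes "Y \<in> borel_measurable M" and "prob {\<omega>\<in>space M. t < Y \<omega>} = exp (- L)"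
  shows "prob {\<omega>\<in>space M. Y \<omega> < t} \<le> L"
proof -
  have survival: "{\<omega>\<in>space M. t < Y \<omega>} \<in> events"
    using borel_measurable_less[OF borel_measurable_const assms(1)] .
  have "prob {\<omega>\<in>space M. Y \<omega> < t} \<le> prob (space M - {\<omega>\<in>space M. t < Y \<omega>})"
    using survival by (intro finite_measure_mono) auto
  also have "\<dots> = 1 - exp (- L)" using prob_compl[OF survival] assms(2) by simp
  also have "\<dots> \<le> L" using exp_ge_add_one_self[of "- L"] by simp
  finally show ?thesis .
qed

lemma mono_on_shifted_le:
  assumes "mono_on {0..} f" and "0 \<le> x" and "0 \<le> d"
  shows "f (pos_part (x - d)) \<le> f x"
  using assms by (auto simp: pos_part_def intro: mono_onD)

lemma xbar_nonneg:
  assumes "0 \<le> c i" and "mono_on {0..} (X i)" and "0 \<le> t"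
  shows "0 \<le> xbar c X i t"
proof -
  have "0 \<le> integral {0..t} (\<lambda>t'. X i t' - X i (pos_part (t' - c i)))"
    using mono_on_shifted_le[OF assms(2) _ assms(1)] by (intro integral_nonneg_unconditional) auto
  then show ?thesis
    using \<open>0 \<le> t\<close> by (simp add: xbar_def)
qed

lemma sum_xbar_le_one:
  assumes c: "\<forall>i<n. 0 \<le> c i" and feas: "gccp_feasible n c X" and "t \<ge> 0"
  shows "(\<Sum>i<n. xbar c X i t) \<le> 1"
proof (cases "t = 0")
  case True
  then show ?thesis by (simp add: xbar_def)
next
  case False
  with \<open>t \<ge> 0\<close> have "t > 0" by simp
  from feas have mono: "\<And>i. i < n \<Longrightarrow> mono_on {0..} (X i)"
    and budget: "\<And>x. x \<ge> 0 \<Longrightarrow> (\<Sum>i<n. X i x - X i (pos_part (x - c i))) \<le> 1"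
    unfolding gccp_feasible_def by blast+
  have "(\<Sum>i<n. integral {0..t} (\<lambda>x. X i x - X i (pos_part (x - c i))))
      \<le> integral {0..t} (\<lambda>x. 1)"
  proof (rule sum_integral_le_integral)
    fix i x assume "i \<in> {..<n}" "x \<in> {0..t}"
    then show "0 \<le> X i x - X i (pos_part (x - c i))"
      using c mono_on_shifted_le[OF mono, of i x "c i"] by fastforce
  qed (use budget in auto)
  then have "(\<Sum>i<n. integral {0..t} (\<lambda>x. X i x - X i (pos_part (x - c i)))) / t \<le> 1"
    using \<open>t > 0\<close> by simp
  then show ?thesis
    by (simp add: xbar_def sum_divide_distrib)
qed

lemma cost_times_cum_rate:
  assumes "c i > 0"
  shows "c i * cum_rate c X i \<tau> = integral {0..\<tau>} (\<lambda>s. xbar c X i (s / 2))"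
  using assms by (simp add: cum_rate_def)

theorem lemma4p3:
  fixes M :: "'w measure" and n :: nat and c :: "nat \<Rightarrow> real"
    and X :: "nat \<Rightarrow> real \<Rightarrow> real" and \<alpha> :: "nat \<Rightarrow> 'w \<Rightarrow> ereal" and \<tau> :: real
  assumes "\<forall>i<n. c i > 0"
    and "gccp_feasible n c X"
    and "poisson_rounding M n c X \<alpha>"
    and "\<tau> \<ge> 0"
  shows "prob_space.expectation M (\<lambda>\<omega>. \<Sum>i\<in>{i. i < n \<and> \<alpha> i \<omega> < ereal \<tau>}. c i) \<le> \<tau>"
proof -
  note c = assms(1) and feas = assms(2) and rounding = assms(3)
  interpret prob_space M using rounding by (simp add: poisson_rounding_def)
  have \<alpha>_measurable: "\<alpha> i \<in> borel_measurable M" if "i < n" for i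
    using rounding that unfolding poisson_rounding_def indep_vars_def by blast
  have survival: "prob {\<omega>\<in>space M. ereal \<tau> < \<alpha> i \<omega>} = exp (- cum_rate c X i \<tau>)" if "i < n" for i
    using rounding that \<open>\<tau> \<ge> 0\<close> unfolding poisson_rounding_def by blast
  have mono: "mono_on {0..} (X i)" if "i < n" for i
    using feas that unfolding gccp_feasible_def by blast
  define A where "A i = {\<omega>\<in>space M. \<alpha> i \<omega> < ereal \<tau>}" for i
  have "expectation (\<lambda>\<omega>. \<Sum>i\<in>{i. i < n \<and> \<alpha> i \<omega> < ereal \<tau>}. c i)
      = expectation (\<lambda>\<omega>. \<Sum>i\<in>{i\<in>{..<n}. \<omega> \<in> A i}. c i)"
    by (intro Bochner_Integration.integral_cong refl sum.cong) (auto simp: A_def)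
  also have "\<dots> = (\<Sum>i<n. c i * prob (A i))"
    using \<alpha>_measurable by (intro expectation_sum_over_occurring_events) (auto simp: A_def)
  also have "\<dots> \<le> (\<Sum>i<n. c i * cum_rate c X i \<tau>)"
    using c \<alpha>_measurable survival unfolding A_def
    by (intro sum_mono mult_left_mono prob_less_le_of_survival) auto
  also have "\<dots> = (\<Sum>i<n. integral {0..\<tau>} (\<lambda>s. xbar c X i (s / 2)))"
    using c by (simp add: cost_times_cum_rate)
  also have "\<dots> \<le> integral {0..\<tau>} (\<lambda>s. 1)"
  proof (rule sum_integral_le_integral)
    fix i s assume "i \<in> {..<n}" "s \<in> {0..\<tau>}"
    then show "0 \<le> xbar c X i (s / 2)"
      using c mono by (intro xbar_nonneg) auto
  next
    fix s assume "s \<in> {0..\<tau>}"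
    then show "(\<Sum>i<n. xbar c X i (s / 2)) \<le> 1"
      using sum_xbar_le_one[of n c, OF _ feas] c by (simp add: less_imp_le)
  qed auto
  also have "\<dots> = \<tau>" using \<open>\<tau> \<ge> 0\<close> by simp
  finally show ?thesis .
qed

end
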